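(* Let $N\ge1$ and let $A$ be an $(N+1)\times N$ complex matrix such that any set of $N$ rows of $A$ is linearly independent. Then the $N(N+1)\times N(N+1)$ matrix $$\hat A=\big[\, I_N\otimes A \ \ \ [D(A)]_{:,\{2,\dots,N+1\}}\,\big]$$ has full rank.
   Context: For a $K\times L$ matrix $B$ with entries $b_{ij}$, $D(B)$ denotes the $KL\times K$ matrix obtained by stacking vertically the diagonal matrices $\mathrm{diag}(b_{11},\dots,b_{K1}),\ \mathrm{diag}(b_{12},\dots,b_{K2}),\dots,\mathrm{diag}(b_{1L},\dots,b_{KL})$ (one $K\times K$ diagonal matrix per column of $B$). For a matrix $B$, $[B]_{:,\mathcal{S}}$ denotes the submatrix consisting of the columns indexed by $\mathcal{S}$. $\otimes$ is the Kronecker product. *)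

theory Defs
  imports "Jordan_Normal_Form.DL_Rank" "Jordan_Normal_Form.DL_Submatrix"
begin

definition kron_mat :: "'a::semiring_0 mat \<Rightarrow> 'a mat \<Rightarrow> 'a mat" where
  "kron_mat P Q = mat (dim_row P * dim_row Q) (dim_col P * dim_col Q)
     (\<lambda>(i,j). P $$ (i div dim_row Q, j div dim_col Q) * Q $$ (i mod dim_row Q, j mod dim_col Q))"

text \<open>D(B): for a K x L matrix B, the KL x K matrix stacking
  diag(b_{1l},...,b_{Kl}) for l = 1..L.  Row r = l*K + k (0-based).\<close>
definition D_mat :: "'a::zero mat \<Rightarrow> 'a mat" where
  "D_mat B = mat (dim_row B * dim_col B) (dim_row B)
     (\<lambda>(r,c). if r mod dim_row B = c then B $$ (c, r div dim_row B) else 0)"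

definition hcat_mat :: "'a::zero mat \<Rightarrow> 'a mat \<Rightarrow> 'a mat" where
  "hcat_mat P Q = mat (dim_row P) (dim_col P + dim_col Q)
     (\<lambda>(i,j). if j < dim_col P then P $$ (i,j) else Q $$ (i, j - dim_col P))"

end

theory Submission
  imports Defs
begin

(* Let c be a left null vector of A; it exists because A has N+1 rows and
   N columns, and no entry of c vanishes because any N rows of A are independent.
   Split a kernel vector v of Ahat A into blocks y_0, ..., y_(N-1) of length N followed
   by z_1, ..., z_N, and put z_0 = 0.  Block l of the equation Ahat A v = 0 reads
   A y_l + diag(column l of A) z = 0.  Pairing with c eliminates A y_l, so the vector
   (c_k z_k)_k is a left null vector of A vanishing at row 0; by independence of the
   rows 1..N it is zero, hence z = 0.  Then A y_l = 0 and independence of the rows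
   0..N-1 gives y_l = 0.  So Ahat A has trivial kernel, i.e. full rank. *)

lemma mat_vec_entry:
  "A \<in> carrier_mat n m \<Longrightarrow> v \<in> carrier_vec m \<Longrightarrow> i < n \<Longrightarrow>
   (A *\<^sub>v v) $ i = (\<Sum>j<m. A $$ (i,j) * v $ j)"
  by (auto simp: mult_mat_vec_def scalar_prod_def atLeast0LessThan)

definition rows_independent :: "'a::field mat \<Rightarrow> nat set \<Rightarrow> bool" where
  "rows_independent A S \<longleftrightarrow>
     (\<forall>c. (\<forall>j<dim_col A. (\<Sum>i\<in>S. c i * A $$ (i,j)) = 0) \<longrightarrow> (\<forall>i\<in>S. c i = 0))"

text \<open>An \<open>(N+1) \<times> N\<close> matrix has a nontrivial left null vector.  Padding its
  transpose with a zero row gives a singular square matrix, whose kernel supplies it.\<close>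
lemma left_null_vector_exists:
  fixes A :: "'a::field mat"
  shows "\<exists>c. (\<exists>i<N+1. c i \<noteq> 0) \<and> (\<forall>j<N. (\<Sum>i<N+1. c i * A $$ (i,j)) = 0)"
proof -
  define B where "B = mat (N+1) (N+1) (\<lambda>(j,i). if j < N then A $$ (i,j) else 0)"
  have B: "B \<in> carrier_mat (N+1) (N+1)" unfolding B_def by auto
  have "det B = (\<Sum>j<N+1. B $$ (N,j) * cofactor B N j)"
    by (rule laplace_expansion_row[OF B]) auto
  also have "\<dots> = 0" by (auto simp: B_def)
  finally obtain v where v: "v \<in> carrier_vec (N+1)" "v \<noteq> 0\<^sub>v (N+1)" "B *\<^sub>v v = 0\<^sub>v (N+1)"
    using det_0_iff_vec_prod_zero_field[OF B] by blast
  have "\<exists>i<N+1. v $ i \<noteq> 0" using v(1,2) by (auto simp: vec_eq_iff)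
  moreover have "(\<Sum>i<N+1. v $ i * A $$ (i,j)) = 0" if j: "j < N" for j
  proof -
    have "(B *\<^sub>v v) $ j = 0" using v(3) j by simp
    then show ?thesis using mat_vec_entry[OF B v(1), of j] j by (simp add: B_def mult.commute)
  qed
  ultimately show ?thesis by blast
qed

lemma rows_independent_square_injective:
  fixes A :: "'a::field mat"
  assumes n: "dim_col A = n" and indep: "rows_independent A {..<n}"
    and y: "\<forall>i<n. (\<Sum>j<n. A $$ (i,j) * y j) = 0" and j: "j < n"
  shows "y j = 0"
proof -
  define B where "B = mat n n (\<lambda>(i,j). A $$ (i,j))"
  have B: "B \<in> carrier_mat n n" unfolding B_def by auto
  have BT: "transpose_mat B \<in> carrier_mat n n" using B by auto
  have "det (transpose_mat B) \<noteq> 0"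
  proof
    assume "det (transpose_mat B) = 0"
    then obtain c where c: "c \<in> carrier_vec n" "c \<noteq> 0\<^sub>v n" "transpose_mat B *\<^sub>v c = 0\<^sub>v n"
      using det_0_iff_vec_prod_zero_field[OF BT] by blast
    have "(\<Sum>i<n. c $ i * A $$ (i,j)) = 0" if "j < n" for j
    proof -
      have "(transpose_mat B *\<^sub>v c) $ j = 0" using c(3) that by simp
      then show ?thesis using mat_vec_entry[OF BT c(1), of j] that by (simp add: B_def mult.commute)
    qed
    then have "\<forall>i<n. c $ i = 0" using indep n unfolding rows_independent_def by auto
    then show False using c(1,2) by (auto simp: vec_eq_iff)
  qed
  then have "det B \<noteq> 0" using det_transpose[OF B] by simp
  moreover have "B *\<^sub>v vec n y = 0\<^sub>v n"
  proof (rule eq_vecI)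
    fix i assume "i < dim_vec (0\<^sub>v n :: 'a vec)"
    then show "(B *\<^sub>v vec n y) $ i = 0\<^sub>v n $ i"
      using mat_vec_entry[OF B vec_carrier, of i y] y by (simp add: B_def)
  qed (use B in auto)
  ultimately have "vec n y = 0\<^sub>v n"
    using det_0_iff_vec_prod_zero_field[OF B] vec_carrier[of n y] by blast
  then show ?thesis using j by (metis index_vec index_zero_vec(1))
qed

lemma combination_vanishes:
  fixes A :: "'a::field mat"
  assumes indep: "rows_independent A ({..<n} - {i})" and "i < n" and ci: "c i = 0"
    and comb: "\<forall>j<dim_col A. (\<Sum>k<n. c k * A $$ (k,j)) = 0"
  shows "\<forall>k<n. c k = 0"
proof -
  have "(\<Sum>k\<in>{..<n} - {i}. c k * A $$ (k,j)) = 0" if "j < dim_col A" for j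
    using comb that \<open>i < n\<close> ci by (simp add: sum_diff1)
  then have "\<forall>k\<in>{..<n} - {i}. c k = 0" using indep unfolding rows_independent_def by blast
  then show ?thesis using ci by auto
qed

text \<open>If any \<open>N\<close> of the \<open>N+1\<close> rows are independent, a nontrivial left null
  vector has no zero entry: otherwise it would be a nontrivial relation among \<open>N\<close> rows.\<close>
lemma left_null_vector_nonvanishing:
  fixes A :: "'a::field mat"
  assumes A: "A \<in> carrier_mat (N+1) N"
    and indep: "\<forall>S \<subseteq> {..<N+1}. card S = N \<longrightarrow> rows_independent A S"
    and c: "\<exists>i<N+1. c i \<noteq> 0" "\<forall>j<N. (\<Sum>i<N+1. c i * A $$ (i,j)) = 0"
    and i: "i < N+1"
  shows "c i \<noteq> 0"
proof
  assume "c i = 0"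
  moreover have "rows_independent A ({..<N+1} - {i})" using indep i by auto
  ultimately have "\<forall>k<N+1. c k = 0" using combination_vanishes[OF _ i] c(2) A by auto
  then show False using c(1) by blast
qed

text \<open>Pairing with the left null vector \<open>c\<close> eliminates \<open>A y_l\<close>, so
  \<open>(c_k z_k)_k\<close> is a left null vector vanishing at row 0, hence zero; as \<open>c\<close> has no
  zero entry, \<open>z = 0\<close>, and then \<open>A y_l = 0\<close> gives \<open>y_l = 0\<close>.\<close>
lemma block_system_trivial:
  fixes A :: "'a::field mat" and y :: "nat \<Rightarrow> nat \<Rightarrow> 'a" and z :: "nat \<Rightarrow> 'a"
  assumes A: "A \<in> carrier_mat (N+1) N"
    and indep: "\<forall>S \<subseteq> {..<N+1}. card S = N \<longrightarrow> rows_independent A S"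
    and z0: "z 0 = 0"
    and eqs: "\<And>l k. l < N \<Longrightarrow> k < N+1 \<Longrightarrow> (\<Sum>c<N. A $$ (k,c) * y l c) + A $$ (k,l) * z k = 0"
  shows "\<forall>k<N+1. z k = 0" and "\<forall>l<N. \<forall>c<N. y l c = 0"
proof -
  obtain c where c: "\<exists>i<N+1. c i \<noteq> 0" "\<forall>j<N. (\<Sum>i<N+1. c i * A $$ (i,j)) = 0"
    using left_null_vector_exists by blast
  have cz: "(\<Sum>k<N+1. (c k * z k) * A $$ (k,l)) = 0" if l: "l < N" for l
  proof -
    have "(\<Sum>k<N+1. (c k * z k) * A $$ (k,l)) = (\<Sum>k<N+1. c k * - (\<Sum>j<N. A $$ (k,j) * y l j))"
    proof (rule sum.cong[OF refl])
      fix k assume "k \<in> {..<N+1}"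
      then have "A $$ (k,l) * z k = - (\<Sum>j<N. A $$ (k,j) * y l j)"
        using eqs[OF l] by (simp add: eq_neg_iff_add_eq_0 add.commute)
      then show "(c k * z k) * A $$ (k,l) = c k * - (\<Sum>j<N. A $$ (k,j) * y l j)"
        by (simp add: algebra_simps)
    qed
    also have "\<dots> = - (\<Sum>k<N+1. c k * (\<Sum>j<N. A $$ (k,j) * y l j))"
      by (simp add: sum_negf)
    also have "\<dots> = - (\<Sum>k<N+1. \<Sum>j<N. c k * A $$ (k,j) * y l j)"
      by (simp add: sum_distrib_left mult.assoc)
    also have "\<dots> = - (\<Sum>j<N. \<Sum>k<N+1. c k * A $$ (k,j) * y l j)"
      by (subst sum.swap) (rule refl)
    also have "\<dots> = - (\<Sum>j<N. y l j * (\<Sum>k<N+1. c k * A $$ (k,j)))"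
      unfolding sum_distrib_left by (simp only: mult_ac)
    also have "\<dots> = 0" using c(2) by simp
    finally show ?thesis .
  qed
  have indep0: "rows_independent A ({..<N+1} - {0})" using indep by auto
  have "\<forall>k<N+1. c k * z k = 0"
  proof (rule combination_vanishes[OF indep0])
    show "\<forall>j<dim_col A. (\<Sum>k<N+1. c k * z k * A $$ (k,j)) = 0" using cz A by simp
  qed (use z0 in simp_all)
  then show z: "\<forall>k<N+1. z k = 0"
    using left_null_vector_nonvanishing[OF A indep c] by auto
  have "rows_independent A {..<N}" using indep by auto
  then show "\<forall>l<N. \<forall>c<N. y l c = 0"
    using rows_independent_square_injective[of A N] eqs z A by auto
qed

text \<open>Index bookkeeping for matrices built from blocks of height \<open>r\<close>: row
  \<open>l*r + k\<close> is row \<open>k\<close> of block \<open>l\<close>.\<close>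
lemma block_index_less:
  assumes "l < (m::nat)" and "k < r"
  shows "l*r + k < m*r"
proof -
  have "l*r + k < (l + 1) * r" using assms(2) by simp
  also have "\<dots> \<le> m * r" using assms(1) by (intro mult_right_mono) auto
  finally show ?thesis .
qed

lemma block_index_div_mod:
  assumes "k < (r::nat)"
  shows "(l*r + k) div r = l" and "(l*r + k) mod r = k"
  using assms by simp_all

lemma sum_blocks:
  fixes f :: "nat \<Rightarrow> 'a::comm_monoid_add"
  shows "(\<Sum>j<m*s. f j) = (\<Sum>l<m. \<Sum>c<s. f (l*s + c))"
proof -
  have "(\<Sum>j\<in>{l*s..<l*s+s}. f j) = (\<Sum>c<s. f (l*s + c))" for l
    using sum.shift_bounds_nat_ivl[of f 0 "l*s" s] by (simp add: lessThan_atLeast0 add.commute)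
  then show ?thesis by (simp add: sum.nat_group[symmetric])
qed

lemma sum_lessThan_add:
  fixes f :: "nat \<Rightarrow> 'a::comm_monoid_add"
  shows "(\<Sum>j<p+q. f j) = (\<Sum>j<p. f j) + (\<Sum>j<q. f (p+j))"
  by (induction q) (simp_all add: add.assoc)

text \<open>The \<open>j\<close>-th element of \<open>{1..n}\<close> is \<open>j+1\<close>: dropping column 0 of \<open>D(A)\<close>
  shifts column indices by one.\<close>
lemma pick_ivl1: "j < n \<Longrightarrow> pick {1..(n::nat)} j = j + 1"
  by (induction j) (simp_all, (intro Least_equality; auto)+)

lemma hcat_carrier:
  "P \<in> carrier_mat n p \<Longrightarrow> Q \<in> carrier_mat n q \<Longrightarrow> hcat_mat P Q \<in> carrier_mat n (p + q)"
  by (simp add: hcat_mat_def)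

lemma hcat_mult_vec:
  assumes P: "P \<in> carrier_mat n p" and Q: "Q \<in> carrier_mat n q"
    and v: "v \<in> carrier_vec (p + q)" and i: "i < n"
  shows "(hcat_mat P Q *\<^sub>v v) $ i = (P *\<^sub>v vec_first v p) $ i + (Q *\<^sub>v vec_last v q) $ i"
proof -
  have "(hcat_mat P Q *\<^sub>v v) $ i = (\<Sum>j<p+q. hcat_mat P Q $$ (i,j) * v $ j)"
    by (rule mat_vec_entry[OF hcat_carrier[OF P Q] v i])
  also have "\<dots> = (\<Sum>j<p. P $$ (i,j) * v $ j) + (\<Sum>j<q. Q $$ (i,j) * v $ (p + j))"
    unfolding sum_lessThan_add using P Q i by (simp add: hcat_mat_def)
  also have "\<dots> = (P *\<^sub>v vec_first v p) $ i + (Q *\<^sub>v vec_last v q) $ i"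
    using v by (simp add: mat_vec_entry[OF P _ i] mat_vec_entry[OF Q _ i] vec_first_def vec_last_def)
  finally show ?thesis .
qed

lemma kron_carrier: "kron_mat P Q \<in> carrier_mat (dim_row P * dim_row Q) (dim_col P * dim_col Q)"
  by (simp add: kron_mat_def)

lemma kron_id_mult_vec:
  fixes A :: "'a::semiring_1 mat"
  assumes A: "A \<in> carrier_mat r s" and u: "u \<in> carrier_vec (m * s)" and l: "l < m" and k: "k < r"
  shows "(kron_mat (1\<^sub>m m) A *\<^sub>v u) $ (l*r + k) = (\<Sum>c<s. A $$ (k,c) * u $ (l*s + c))"
proof -
  have K: "kron_mat (1\<^sub>m m) A \<in> carrier_mat (m*r) (m*s)"
    using kron_carrier[of "1\<^sub>m m" A] A by simp
  have row: "l*r + k < m*r" using block_index_less[OF l k] .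
  have entry: "kron_mat (1\<^sub>m m) A $$ (l*r + k, l'*s + c) = (if l' = l then A $$ (k,c) else 0)"
    if "l' < m" "c < s" for l' c
  proof -
    have "l'*s + c < m*s" using block_index_less that .
    then show ?thesis using that row A k l by (simp add: kron_mat_def)
  qed
  have "(kron_mat (1\<^sub>m m) A *\<^sub>v u) $ (l*r + k) = (\<Sum>j<m*s. kron_mat (1\<^sub>m m) A $$ (l*r + k, j) * u $ j)"
    by (rule mat_vec_entry[OF K u row])
  also have "\<dots> = (\<Sum>l'<m. \<Sum>c<s. (if l' = l then A $$ (k,c) else 0) * u $ (l'*s + c))"
    by (simp add: sum_blocks entry)
  also have "\<dots> = (\<Sum>l'<m. if l' = l then (\<Sum>c<s. A $$ (k,c) * u $ (l'*s + c)) else 0)"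
    by (intro sum.cong) auto
  also have "\<dots> = (\<Sum>c<s. A $$ (k,c) * u $ (l*s + c))"
    using l by simp
  finally show ?thesis .
qed

lemma D_columns_carrier:
  assumes "A \<in> carrier_mat (n + 1) L"
  shows "submatrix (D_mat A) UNIV {1..n} \<in> carrier_mat ((n + 1) * L) n"
proof (rule carrier_matI)
  have "{i. i < dim_row (D_mat A) \<and> i \<in> UNIV} = {..<(n + 1) * L}"
    using assms by (auto simp: D_mat_def)
  then show "dim_row (submatrix (D_mat A) UNIV {1..n}) = (n + 1) * L"
    unfolding dim_submatrix by simp
  have "{j. j < dim_col (D_mat A) \<and> j \<in> {1..n}} = {1..n}"
    using assms by (auto simp: D_mat_def)
  then show "dim_col (submatrix (D_mat A) UNIV {1..n}) = n"
    unfolding dim_submatrix by simp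
qed

lemma D_columns_entry:
  assumes A: "A \<in> carrier_mat (n + 1) L" and l: "l < L" and k: "k < n + 1" and c: "c < n"
  shows "submatrix (D_mat A) UNIV {1..n} $$ (l*(n+1) + k, c) = (if k = c + 1 then A $$ (k, l) else 0)"
proof -
  define i where "i = l*(n+1) + k"
  have row: "i < (n+1)*L" using block_index_less[OF l k] by (simp add: i_def mult.commute)
  have div_mod: "i div (n+1) = l" "i mod (n+1) = k"
    unfolding i_def using block_index_div_mod[OF k] by simp_all
  have "submatrix (D_mat A) UNIV {1..n} $$ (i, c) = D_mat A $$ (i, c + 1)"
  proof -
    have "{j. j < n + 1 \<and> j \<in> {1..n}} = {1..n}" by auto
    then have "i < card {i. i < dim_row (D_mat A) \<and> i \<in> UNIV}"
         "c < card {j. j < dim_col (D_mat A) \<and> j \<in> {1..n}}"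
      using A row c by (simp_all add: D_mat_def)
    from submatrix_index[OF this] show ?thesis unfolding pick_UNIV pick_ivl1[OF c] .
  qed
  also have "\<dots> = (if k = c + 1 then A $$ (k, l) else 0)"
    using A row c div_mod by (simp add: D_mat_def)
  finally show ?thesis unfolding i_def .
qed

lemma D_columns_mult_vec:
  assumes A: "A \<in> carrier_mat (n + 1) L" and w: "w \<in> carrier_vec n" and l: "l < L" and k: "k < n + 1"
  shows "(submatrix (D_mat A) UNIV {1..n} *\<^sub>v w) $ (l*(n+1) + k) =
         (if k = 0 then 0 else A $$ (k, l) * w $ (k - 1))"
proof -
  have row: "l*(n+1) + k < (n+1)*L" using block_index_less[OF l k] by (simp add: mult.commute)
  have "(submatrix (D_mat A) UNIV {1..n} *\<^sub>v w) $ (l*(n+1) + k) =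
        (\<Sum>c<n. (if k = c + 1 then A $$ (k, l) else 0) * w $ c)"
    unfolding mat_vec_entry[OF D_columns_carrier[OF A] w row]
    by (rule sum.cong[OF refl], subst D_columns_entry[OF A l k]) simp_all
  also have "\<dots> = (if k = 0 then 0 else A $$ (k, l) * w $ (k - 1))"
    using k by (cases k) (auto simp: if_distrib[of "\<lambda>x. x * _"] cong: if_cong)
  finally show ?thesis .
qed

definition Ahat :: "'a::field mat \<Rightarrow> 'a mat" where
  "Ahat A = hcat_mat (kron_mat (1\<^sub>m (dim_col A)) A) (submatrix (D_mat A) UNIV {1..dim_col A})"

lemma Ahat_eq:
  assumes "A \<in> carrier_mat (N + 1) N"
  shows "Ahat A = hcat_mat (kron_mat (1\<^sub>m N) A) (submatrix (D_mat A) UNIV {1..N})"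
  using assms unfolding Ahat_def by simp

lemma Ahat_carrier:
  assumes A: "A \<in> carrier_mat (N + 1) N"
  shows "Ahat A \<in> carrier_mat (N * (N + 1)) (N * (N + 1))"
proof -
  have K: "kron_mat (1\<^sub>m N) A \<in> carrier_mat (N * (N + 1)) (N * N)"
    using kron_carrier[of "1\<^sub>m N" A] A by simp
  have D: "submatrix (D_mat A) UNIV {1..N} \<in> carrier_mat (N * (N + 1)) N"
    using D_columns_carrier[OF A] by (simp add: mult.commute)
  have "N * N + N = N * (N + 1)" by (simp add: algebra_simps)
  then show ?thesis using hcat_carrier[OF K D] unfolding Ahat_eq[OF A] by metis
qed

lemma Ahat_mult_vec:
  assumes A: "A \<in> carrier_mat (N + 1) N" and v: "v \<in> carrier_vec (N * (N + 1))"
    and l: "l < N" and k: "k < N + 1"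
  shows "(Ahat A *\<^sub>v v) $ (l*(N+1) + k) =
         (\<Sum>c<N. A $$ (k,c) * v $ (l*N + c)) + (if k = 0 then 0 else A $$ (k,l) * v $ (N*N + k - 1))"
proof -
  have K: "kron_mat (1\<^sub>m N) A \<in> carrier_mat (N * (N + 1)) (N * N)"
    using kron_carrier[of "1\<^sub>m N" A] A by simp
  have D: "submatrix (D_mat A) UNIV {1..N} \<in> carrier_mat (N * (N + 1)) N"
    using D_columns_carrier[OF A] by (simp add: mult.commute)
  have v': "v \<in> carrier_vec (N * N + N)" using v by (simp add: algebra_simps)
  have row: "l*(N+1) + k < N*(N+1)" using block_index_less[OF l k] .
  have "(Ahat A *\<^sub>v v) $ (l*(N+1) + k) =
      (kron_mat (1\<^sub>m N) A *\<^sub>v vec_first v (N*N)) $ (l*(N+1) + k)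
      + (submatrix (D_mat A) UNIV {1..N} *\<^sub>v vec_last v N) $ (l*(N+1) + k)"
    unfolding Ahat_eq[OF A] by (rule hcat_mult_vec[OF K D v' row])
  also have "\<dots> = (\<Sum>c<N. A $$ (k,c) * vec_first v (N*N) $ (l*N + c))
      + (if k = 0 then 0 else A $$ (k,l) * vec_last v N $ (k - 1))"
    unfolding kron_id_mult_vec[OF A vec_first_carrier l k] D_columns_mult_vec[OF A vec_last_carrier l k] ..
  also have "\<dots> = (\<Sum>c<N. A $$ (k,c) * v $ (l*N + c)) + (if k = 0 then 0 else A $$ (k,l) * v $ (N*N + k - 1))"
  proof -
    have "vec_first v (N*N) $ (l*N + c) = v $ (l*N + c)" if "c < N" for c
      using block_index_less[OF l that] by (simp add: vec_first_def)
    moreover have "vec_last v N $ (k - 1) = v $ (N*N + k - 1)" if "k \<noteq> 0"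
      using v k that by (cases k) (simp_all add: vec_last_def algebra_simps)
    ultimately show ?thesis by simp
  qed
  finally show ?thesis .
qed

lemma full_rank_of_trivial_kernel:
  fixes M :: "'a::field mat"
  assumes M: "M \<in> carrier_mat n n"
    and ker: "\<And>v. v \<in> carrier_vec n \<Longrightarrow> M *\<^sub>v v = 0\<^sub>v n \<Longrightarrow> v = 0\<^sub>v n"
  shows "vec_space.rank n M = n"
  using vec_space.det_rank_iff[OF M] det_0_iff_vec_prod_zero_field[OF M] ker by blast

lemma zero_vec_by_blocks:
  assumes v: "v \<in> carrier_vec (N * (N + 1))"
    and blocks: "\<forall>l<N. \<forall>c<N. v $ (l*N + c) = 0" and tail: "\<forall>k<N. v $ (N*N + k) = 0"
  shows "v = 0\<^sub>v (N * (N + 1))"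
proof (rule eq_vecI)
  fix p assume "p < dim_vec (0\<^sub>v (N * (N + 1)) :: 'a vec)"
  then have p: "p < N*N + N" by (simp add: algebra_simps)
  show "v $ p = 0\<^sub>v (N * (N + 1)) $ p"
  proof (cases "p < N*N")
    case True
    then have "N > 0" by (cases N) auto
    with True have "p div N < N" "p mod N < N" by (simp_all add: div_less_iff_less_mult)
    then have "v $ ((p div N)*N + p mod N) = 0" using blocks by blast
    then show ?thesis using p by simp
  next
    case False
    then have "p - N*N < N" using p by simp
    then have "v $ (N*N + (p - N*N)) = 0" using tail by blast
    then show ?thesis using False p by simp
  qed
qed (use v in simp)

theorem lemma3:
  fixes N :: nat and A :: "complex mat"
  assumes "N \<ge> 1"
    and "A \<in> carrier_mat (N + 1) N"
    and "\<forall>S \<subseteq> {..<N + 1}. card S = N \<longrightarrow>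
           (\<forall>c :: nat \<Rightarrow> complex. (\<forall>j < N. (\<Sum>i\<in>S. c i * A $$ (i, j)) = 0)
              \<longrightarrow> (\<forall>i\<in>S. c i = 0))"
  shows "vec_space.rank (N * (N + 1))
           (hcat_mat (kron_mat (1\<^sub>m N) A) (submatrix (D_mat A) UNIV {1..N}))
         = N * (N + 1)"
proof -
  note A = assms(2)
  have indep: "\<forall>S \<subseteq> {..<N+1}. card S = N \<longrightarrow> rows_independent A S"
    using A assms(3) by (simp add: rows_independent_def)
  have "vec_space.rank (N * (N + 1)) (Ahat A) = N * (N + 1)"
  proof (rule full_rank_of_trivial_kernel[OF Ahat_carrier[OF A]])
    fix v assume v: "v \<in> carrier_vec (N * (N + 1))" and ker: "Ahat A *\<^sub>v v = 0\<^sub>v (N * (N + 1))"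
    define y where "y l c = v $ (l*N + c)" for l c
    define z where "z k = (if k = 0 then 0 else v $ (N*N + k - 1))" for k
    have "(\<Sum>c<N. A $$ (k,c) * y l c) + A $$ (k,l) * z k = 0" if "l < N" "k < N+1" for l k
    proof -
      have "(Ahat A *\<^sub>v v) $ (l*(N+1) + k) = 0" using ker block_index_less[OF that] by simp
      with Ahat_mult_vec[OF A v that] show ?thesis by (cases k) (simp_all add: y_def z_def)
    qed
    from block_system_trivial[OF A indep _ this] have "\<forall>k<N+1. z k = 0" "\<forall>l<N. \<forall>c<N. y l c = 0"
      by (simp_all add: z_def)
    then show "v = 0\<^sub>v (N * (N + 1))"
      by (intro zero_vec_by_blocks[OF v]) (auto simp: y_def z_def dest: spec[of _ "Suc _"])
  qed
  then show ?thesis unfolding Ahat_eq[OF A] .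
qed

end
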